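(* For any way of choosing the element $t$ at each step, the Positivity Algorithm terminates and the set $S$ it returns contains an index $i\in\{1,\dots,n\}$ if and only if there exists a positivity-showing sequence for $i$.
   Context: Inequalities between vectors are componentwise. An M-matrix is a matrix $sI-P$ with $P\geq0$ entrywise and $s\geq\rho(P)$ ($\rho$ = spectral radius). Let $M\in\mathbb R^{n\times n}$ be a nonsingular M-matrix, $a\in\mathbb R^n$ with $a\geq 0$, and $b:\mathbb R^n\times\mathbb R^n\to\mathbb R^n$ a bilinear map with $b(x,y)\geq 0$ whenever $x,y\geq 0$. Let $(M^{-1}B)_{rst}$ denote the tensor of $(x,y)\mapsto M^{-1}b(x,y)$, i.e. $(M^{-1}b(x,y))_t=\sum_{r,s}(M^{-1}B)_{rst}x_r y_s$. Let $e_t$ be the $t$-th canonical basis vector and $e_S=\sum_{s\in S}e_s$. A finite sequence $S_1,\dots,S_N$ of subsets of $\{1,\dots,n\}$ is positivity-showing for $i$ if: (i) $S_1=\{h:(M^{-1}a)_h>0\}$; (ii) $S_h\subseteq S_{h+1}$ for each $h$; (iii) for each $h$ and each $t\in S_{h+1}\setminus S_h$ there exist $r,s\in S_h$ (possibly $r=s$) with $(M^{-1}B)_{rst}>0$; (iv) $i\in S_N$. Positivity Algorithm: initialize $S=T=\{i:(M^{-1}a)_i>0\}$. While $T\neq\emptyset$ and $S\neq\{1,\dots,n\}$: choose any $t\in T$, remove $t$ from $T$, compute $u=M^{-1}\big(b(e_S,e_t)+b(e_t,e_S)\big)$ with the current $S$, and for every $i\notin S$ with $u_i>0$ add $i$ to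 both $S$ and $T$. Return $S$. *)

theory Defs
  imports "HOL-Analysis.Analysis"
begin

text \<open>Matrices are n x n real matrices indexed by a finite type 'n (so {1..n} = UNIV).\<close>

definition cmat :: "real^'n^'n \<Rightarrow> complex^'n^'n" where
  "cmat P = (\<chi> i j. complex_of_real (P $ i $ j))"

definition is_eigenvalue :: "real^'n^'n \<Rightarrow> complex \<Rightarrow> bool" where
  "is_eigenvalue P c \<longleftrightarrow> (\<exists>v::complex^'n. v \<noteq> 0 \<and> cmat P *v v = c *s v)"

definition spectral_radius :: "real^'n^'n \<Rightarrow> real" where
  "spectral_radius P = Max (cmod ` {c. is_eigenvalue P c})"

definition nonneg_mat :: "real^'n^'n \<Rightarrow> bool" where
  "nonneg_mat P \<longleftrightarrow> (\<forall>i j. P $ i $ j \<ge> 0)"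

definition nonneg_vec :: "real^'n \<Rightarrow> bool" where
  "nonneg_vec x \<longleftrightarrow> (\<forall>i. x $ i \<ge> 0)"

definition M_matrix :: "real^'n^'n \<Rightarrow> bool" where
  "M_matrix M \<longleftrightarrow> (\<exists>s P. nonneg_mat P \<and> M = s *\<^sub>R mat 1 - P \<and> s \<ge> spectral_radius P)"

definition nonsingular_M_matrix :: "real^'n^'n \<Rightarrow> bool" where
  "nonsingular_M_matrix M \<longleftrightarrow> M_matrix M \<and> invertible M"

definition ind_vec :: "'n set \<Rightarrow> real^'n" where
  "ind_vec S = (\<chi> i. if i \<in> S then 1 else 0)"

definition MB_tensor :: "real^'n^'n \<Rightarrow> (real^'n \<Rightarrow> real^'n \<Rightarrow> real^'n) \<Rightarrow> 'n \<Rightarrow> 'n \<Rightarrow> 'n \<Rightarrow> real" where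
  "MB_tensor M b r s t = (matrix_inv M *v b (axis r 1) (axis s 1)) $ t"

definition init_set :: "real^'n^'n \<Rightarrow> real^'n \<Rightarrow> 'n set" where
  "init_set M a = {h. (matrix_inv M *v a) $ h > 0}"

text \<open>Positivity-showing sequence S_1..S_N, given as a nonempty list (Ss ! 0 = S_1).\<close>
definition positivity_showing ::
  "real^'n^'n \<Rightarrow> real^'n \<Rightarrow> (real^'n \<Rightarrow> real^'n \<Rightarrow> real^'n) \<Rightarrow> 'n \<Rightarrow> 'n set list \<Rightarrow> bool" where
  "positivity_showing M a b i Ss \<longleftrightarrow>
     Ss \<noteq> [] \<and>
     Ss ! 0 = init_set M a \<and>
     (\<forall>h. Suc h < length Ss \<longrightarrow> Ss ! h \<subseteq> Ss ! Suc h) \<and>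
     (\<forall>h. Suc h < length Ss \<longrightarrow>
        (\<forall>t \<in> Ss ! Suc h - Ss ! h. \<exists>r \<in> Ss ! h. \<exists>s \<in> Ss ! h. MB_tensor M b r s t > 0)) \<and>
     i \<in> last Ss"

text \<open>Positivity Algorithm as a nondeterministic transition system on states (S, T).
  One step = one iteration of the while loop, with any choice of t in T.\<close>
definition pos_step ::
  "real^'n^'n \<Rightarrow> (real^'n \<Rightarrow> real^'n \<Rightarrow> real^'n) \<Rightarrow> 'n set \<times> 'n set \<Rightarrow> 'n set \<times> 'n set \<Rightarrow> bool" where
  "pos_step M b st st' \<longleftrightarrow>
     (let S = fst st; T = snd st in
      T \<noteq> {} \<and> S \<noteq> UNIV \<and>
      (\<exists>t \<in> T.
         let u = matrix_inv M *v (b (ind_vec S) (axis t 1) + b (axis t 1) (ind_vec S));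
             N = {i. i \<notin> S \<and> u $ i > 0}
         in st' = (S \<union> N, (T - {t}) \<union> N)))"

definition pos_halted :: "'n set \<times> 'n set \<Rightarrow> bool" where
  "pos_halted st \<longleftrightarrow> snd st = {} \<or> fst st = UNIV"

end

theory Submission
  imports Defs
begin

text \<open>
  Termination is purely combinatorial: each iteration either adds indices to S or removes
  the processed index from T, so the measure |complement S| * (n + 1) + |T| decreases.

  For correctness the only analytic input is that the inverse of a nonsingular M-matrix
  M = sI - P is entrywise nonnegative.  We prove this by a continuation argument on the
  resolvents (tI - P)^-1, t >= s: they are nonnegative for large t (a comparison principle
  in the sup-norm), and nonnegativity propagates downwards in steps controlled by the
  sup-norm of the resolvent, which the invertibility of tI - P for t >= s keeps bounded.
  The spectral radius enters only through invertibility of tI - P for t > rho(P).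

  Given nonnegativity of the tensor M^-1 B, an invariant of the loop shows that S is always
  the last set of a positivity-showing chain (soundness) and that, once T is empty, S is
  closed under the tensor and hence contains every chain (completeness).
\<close>

text \<open>The library defines matrix_inv by choice; for an invertible matrix it is a two-sided inverse.\<close>

lemma matrix_inv_inverse:
  fixes A :: "real^'n^'n"
  assumes "invertible A"
  shows "A ** matrix_inv A = mat 1" and "matrix_inv A ** A = mat 1"
  using someI_ex[OF assms[unfolded invertible_def]] unfolding matrix_inv_def by auto

lemma infnorm_attained_cart: "\<exists>i. infnorm (x::real^'n) = \<bar>x$i\<bar>"
proof -
  have "{\<bar>x$i\<bar> |i. i \<in> UNIV} = range (\<lambda>i. \<bar>x$i\<bar>)" by auto
  hence "infnorm x = Max (range (\<lambda>i. \<bar>x$i\<bar>))"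
    unfolding infnorm_cart by (simp add: cSup_eq_Max)
  also have "\<dots> \<in> range (\<lambda>i. \<bar>x$i\<bar>)" by (rule Max_in) auto
  finally show ?thesis by auto
qed

lemma infnorm_le_cart: "(\<And>i. \<bar>(x::real^'n)$i\<bar> \<le> c) \<Longrightarrow> infnorm x \<le> c"
  using infnorm_attained_cart[of x] by metis

lemma matrix_infnorm_bound:
  fixes A :: "real^'n^'m"
  obtains C where "C \<ge> 0" and "\<And>v. infnorm (A *v v) \<le> C * infnorm v"
proof -
  obtain B where B: "B > 0" "\<And>v. norm (A *v v) \<le> B * norm v"
    using linear_bounded_pos[OF matrix_vector_mul_linear] by blast
  have "infnorm (A *v v) \<le> (B * sqrt DIM(real^'n)) * infnorm v" for v
  proof -
    have "infnorm (A *v v) \<le> B * norm v" using infnorm_le_norm B(2) by (rule order_trans)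
    also have "\<dots> \<le> B * (sqrt DIM(real^'n) * infnorm v)"
      using B(1) norm_le_infnorm[of v] by simp
    finally show ?thesis by simp
  qed
  moreover have "B * sqrt DIM(real^'n) \<ge> 0" using B(1) by simp
  ultimately show ?thesis using that by blast
qed

definition nonneg_preserving :: "real^'n^'m \<Rightarrow> bool" where
  "nonneg_preserving R \<longleftrightarrow> (\<forall>x. nonneg_vec x \<longrightarrow> nonneg_vec (R *v x))"

lemma nonneg_mat_preserving: "nonneg_mat P \<Longrightarrow> nonneg_preserving P"
  unfolding nonneg_preserving_def nonneg_mat_def nonneg_vec_def
  by (auto simp: matrix_vector_mult_def intro!: sum_nonneg)

text \<open>Comparison principle: if z >= 0 satisfies z <= d R z componentwise for a nonnegativity
  preserving R with d * |R 1|_inf < 1, then z = 0 (compare z with |z|_inf times the all-ones vector).\<close>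

lemma subsolution_zero:
  fixes R :: "real^'n^'n"
  assumes R: "nonneg_preserving R" and z: "nonneg_vec z"
    and sub: "\<And>i. z$i \<le> d * (R *v z)$i" and d: "d \<ge> 0" and small: "d * infnorm (R *v 1) < 1"
  shows "z = 0"
proof -
  let ?m = "infnorm z"
  have "nonneg_vec (?m *\<^sub>R 1 - z)"
    using component_le_infnorm_cart[of z] z unfolding nonneg_vec_def by (auto intro: order_trans[OF abs_ge_self])
  hence "nonneg_vec (R *v (?m *\<^sub>R 1 - z))" using R unfolding nonneg_preserving_def by blast
  hence Rz: "(R *v z)$i \<le> ?m * (R *v 1)$i" for i
    unfolding nonneg_vec_def by (auto simp: matrix_vector_mult_diff_distrib matrix_vector_mult_scaleR)
  obtain j where j: "?m = z$j" using infnorm_attained_cart[of z] z unfolding nonneg_vec_def by force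
  have "?m \<le> d * (R *v z)$j" using sub j by simp
  also have "\<dots> \<le> d * (?m * (R *v 1)$j)" using Rz d by (rule mult_left_mono)
  also have "\<dots> \<le> d * (?m * infnorm (R *v 1))"
    using d infnorm_pos_le[of z] component_le_infnorm_cart[of "R *v 1" j]
    by (intro mult_left_mono) (auto intro: order_trans[OF abs_ge_self])
  finally have "?m * (1 - d * infnorm (R *v 1)) \<le> 0" by (simp add: algebra_simps)
  hence "?m \<le> 0" using small by (simp add: mult_le_0_iff)
  thus "z = 0" using infnorm_pos_le[of z] infnorm_eq_0[of z] by simp
qed

text \<open>Consequently, a solution of y = a + d R y with a >= 0 is nonnegative: its negative
  part is a subsolution in the sense above.\<close>

lemma fixpoint_nonneg:
  fixes R :: "real^'n^'n"
  assumes R: "nonneg_preserving R" and a: "nonneg_vec a" and y: "y = a + d *\<^sub>R (R *v y)"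
    and d: "d \<ge> 0" and small: "d * infnorm (R *v 1) < 1"
  shows "nonneg_vec y"
proof -
  define p where "p = (\<chi> i. max (y$i) 0)"
  define z where "z = (\<chi> i. max (- y$i) 0)"
  have y_split: "y = p - z" unfolding p_def z_def by (auto simp: vec_eq_iff max_def)
  have pz: "nonneg_vec p" "nonneg_vec z" unfolding p_def z_def nonneg_vec_def by auto
  hence Rpz: "nonneg_vec (R *v p)" "nonneg_vec (R *v z)" using R unfolding nonneg_preserving_def by auto
  have "z$i \<le> d * (R *v z)$i" for i
  proof (cases "y$i < 0")
    case True
    have "y$i = a$i + d * (R *v p)$i - d * (R *v z)$i"
      using arg_cong[OF y, of "\<lambda>v. v$i"] unfolding y_split
      by (simp add: algebra_simps)
    moreover have "0 \<le> a$i" "0 \<le> d * (R *v p)$i" using a Rpz d unfolding nonneg_vec_def by auto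
    ultimately show ?thesis using True unfolding z_def by simp
  next
    case False
    thus ?thesis using Rpz d unfolding z_def nonneg_vec_def by simp
  qed
  hence "z = 0" using subsolution_zero[OF R pz(2) _ d small] by blast
  thus ?thesis using y_split pz unfolding nonneg_vec_def by simp
qed

definition char_matrix :: "real^'n^'n \<Rightarrow> complex \<Rightarrow> complex^'n^'n" where
  "char_matrix P c = (\<chi> i j. cmat P $ i $ j - (if i = j then c else 0))"

lemma eigenvalue_iff_det: "is_eigenvalue P c \<longleftrightarrow> det (char_matrix P c) = 0"
proof -
  have "char_matrix P c *v v = cmat P *v v - c *s v" for v
    by (simp add: vec_eq_iff char_matrix_def matrix_vector_mult_def sum_subtractf left_diff_distrib
        if_distrib[where f="\<lambda>x. x * _"] cong: if_cong)
  hence "is_eigenvalue P c \<longleftrightarrow> (\<exists>v. v \<noteq> 0 \<and> char_matrix P c *v v = 0)"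
    unfolding is_eigenvalue_def by (metis eq_iff_diff_eq_0)
  thus ?thesis
    using invertible_det_nz[of "char_matrix P c"] invertible_left_inverse[of "char_matrix P c"]
      matrix_left_invertible_ker[of "char_matrix P c"] by blast
qed

lemma eigenvalue_norm_le:
  fixes P :: "real^'n^'n"
  assumes "is_eigenvalue P c"
  shows "cmod c \<le> (\<Sum>i\<in>UNIV. \<Sum>j\<in>UNIV. \<bar>P$i$j\<bar>)"
proof -
  obtain v where v0: "v \<noteq> 0" and ev: "cmat P *v v = c *s v"
    using assms unfolding is_eigenvalue_def by auto
  define m where "m = Max (range (\<lambda>i. cmod (v$i)))"
  have "m \<in> range (\<lambda>i. cmod (v$i))" unfolding m_def by (rule Max_in) auto
  then obtain i where i: "m = cmod (v$i)" by auto
  have m_ge: "cmod (v$j) \<le> m" for j unfolding m_def by (rule Max_ge) auto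
  have "m > 0"
  proof (rule ccontr)
    assume "\<not> m > 0"
    hence "cmod (v$j) \<le> 0" for j using m_ge[of j] by linarith
    hence "v$j = 0" for j by (meson norm_le_zero_iff)
    thus False using v0 by (simp add: vec_eq_iff)
  qed
  have "c * v$i = (\<Sum>j\<in>UNIV. cmat P$i$j * v$j)"
    using arg_cong[OF ev, of "\<lambda>x. x$i"] by (simp add: matrix_vector_mult_def)
  hence "cmod c * m = cmod (\<Sum>j\<in>UNIV. cmat P$i$j * v$j)" using i by (metis norm_mult)
  also have "\<dots> \<le> (\<Sum>j\<in>UNIV. \<bar>P$i$j\<bar> * cmod (v$j))"
    by (rule order_trans[OF norm_sum]) (simp add: cmat_def norm_mult)
  also have "\<dots> \<le> (\<Sum>j\<in>UNIV. \<bar>P$i$j\<bar>) * m"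
    by (simp add: sum_distrib_right sum_mono mult_left_mono m_ge)
  also have "\<dots> \<le> (\<Sum>i\<in>UNIV. \<Sum>j\<in>UNIV. \<bar>P$i$j\<bar>) * m"
    using \<open>m > 0\<close>
    by (intro mult_right_mono member_le_sum[where f="\<lambda>i. \<Sum>j\<in>UNIV. \<bar>P$i$j\<bar>"]) (auto intro: sum_nonneg)
  finally show ?thesis using \<open>m > 0\<close> by simp
qed

text \<open>A real matrix has finitely many complex eigenvalues: they are roots of the characteristic
  polynomial, which is nonzero because large reals are not eigenvalues.  This makes
  spectral_radius (a Max over the eigenvalues) meaningful.\<close>

lemma finite_eigenvalues: "finite {c. is_eigenvalue (P::real^'n^'n) c}"
proof -
  define q where "q = (\<Sum>p\<in>{p. p permutes (UNIV::'n set)}. of_int (sign p) *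
     (\<Prod>i\<in>UNIV. [: cmat P $ i $ p i, - (if i = p i then 1 else 0) :]))"
  have q_eval: "poly q c = det (char_matrix P c)" for c
    unfolding q_def det_def poly_sum poly_prod
    by (intro sum.cong refl) (simp add: poly_prod char_matrix_def; intro prod.cong; auto)
  define N where "N = (\<Sum>i\<in>UNIV. \<Sum>j\<in>UNIV. \<bar>P$i$j\<bar>)"
  have "\<not> is_eigenvalue P (of_real (\<bar>N\<bar> + 1))"
    using eigenvalue_norm_le[of P "of_real (\<bar>N\<bar> + 1)"] unfolding N_def by auto
  hence "q \<noteq> 0" using q_eval eigenvalue_iff_det by fastforce
  hence "finite {c. poly q c = 0}" by (rule poly_roots_finite)
  moreover have "{c. is_eigenvalue P c} \<subseteq> {c. poly q c = 0}" using q_eval eigenvalue_iff_det by auto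
  ultimately show ?thesis by (rule finite_subset[rotated])
qed

lemma invertible_above_spectral_radius:
  fixes P :: "real^'n^'n"
  assumes "t > spectral_radius P"
  shows "invertible (t *\<^sub>R mat 1 - P)"
proof (rule ccontr)
  assume "\<not> invertible (t *\<^sub>R mat 1 - P)"
  then obtain v where v0: "v \<noteq> 0" and vk: "(t *\<^sub>R mat 1 - P) *v v = 0"
    unfolding invertible_left_inverse matrix_left_invertible_ker by blast
  define w where "w = (\<chi> i. complex_of_real (v$i))"
  have "w \<noteq> 0" using v0 unfolding w_def by (auto simp: vec_eq_iff)
  have "(P *v v)$i = t * v$i" for i
    using arg_cong[OF vk, of "\<lambda>x. x$i"]
    by (simp add: matrix_vector_mult_diff_rdistrib scaleR_matrix_vector_assoc[symmetric])
  hence "cmat P *v w = of_real t *s w"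
    by (simp add: vec_eq_iff cmat_def w_def matrix_vector_mult_def flip: of_real_mult of_real_sum)
  hence "is_eigenvalue P (of_real t)" unfolding is_eigenvalue_def using \<open>w \<noteq> 0\<close> by blast
  hence "\<bar>t\<bar> \<le> spectral_radius P" unfolding spectral_radius_def
    using finite_eigenvalues[of P] by (metis Max_ge finite_imageI image_eqI mem_Collect_eq norm_of_real)
  thus False using assms by linarith
qed

definition resolvent :: "real^'n^'n \<Rightarrow> real \<Rightarrow> real^'n^'n" where
  "resolvent P t = matrix_inv (t *\<^sub>R mat 1 - P)"

lemma resolvent_iff:
  fixes P :: "real^'n^'n"
  assumes inv: "invertible (t *\<^sub>R mat 1 - P)"
  shows "y = resolvent P t *v x \<longleftrightarrow> t *\<^sub>R y - P *v y = x"
proof -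
  have shift: "(t *\<^sub>R mat 1 - P) *v v = t *\<^sub>R v - P *v v" for v
    by (simp add: matrix_vector_mult_diff_rdistrib scaleR_matrix_vector_assoc[symmetric])
  have "y = resolvent P t *v x \<longleftrightarrow> (t *\<^sub>R mat 1 - P) *v y = x"
    using matrix_inv_inverse[OF inv] unfolding resolvent_def
    by (metis matrix_vector_mul_assoc matrix_vector_mul_lid)
  thus ?thesis by (simp add: shift)
qed

text \<open>For t larger than |P 1|_inf the resolvent of a nonnegative P is nonnegative, since
  y = R(t) x solves y = x/t + (1/t) P y.\<close>

lemma resolvent_preserving_large:
  fixes P :: "real^'n^'n"
  assumes P: "nonneg_preserving P" and large: "t > infnorm (P *v 1)"
    and inv: "invertible (t *\<^sub>R mat 1 - P)"
  shows "nonneg_preserving (resolvent P t)"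
  unfolding nonneg_preserving_def
proof (intro allI impI)
  fix x :: "real^'n" assume x: "nonneg_vec x"
  define y where "y = resolvent P t *v x"
  have t: "t > 0" using large infnorm_pos_le[of "P *v 1"] by linarith
  have "t *\<^sub>R y = x + P *v y" using resolvent_iff[OF inv] y_def by (simp add: algebra_simps)
  hence "(1/t) *\<^sub>R (t *\<^sub>R y) = (1/t) *\<^sub>R (x + P *v y)" by simp
  hence y_eq: "y = (1/t) *\<^sub>R x + (1/t) *\<^sub>R (P *v y)" using t by (simp add: scaleR_add_right)
  have "nonneg_vec ((1/t) *\<^sub>R x)" using x t unfolding nonneg_vec_def by simp
  moreover have "(1/t) * infnorm (P *v 1) < 1" using t large by (simp add: field_simps)
  ultimately have "nonneg_vec y" using fixpoint_nonneg[OF P _ y_eq] t by simp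
  thus "nonneg_vec (resolvent P t *v x)" unfolding y_def .
qed

text \<open>Nonnegativity of the resolvent propagates downwards: if R(u) >= 0 and
  (u - t) |R(u) 1|_inf < 1 then R(t) >= 0, because R(t) x solves y = R(u) x + (u - t) R(u) y.\<close>

lemma resolvent_preserving_shift:
  fixes P :: "real^'n^'n"
  assumes inv_t: "invertible (t *\<^sub>R mat 1 - P)" and inv_u: "invertible (u *\<^sub>R mat 1 - P)"
    and le: "t \<le> u" and R: "nonneg_preserving (resolvent P u)"
    and small: "(u - t) * infnorm (resolvent P u *v 1) < 1"
  shows "nonneg_preserving (resolvent P t)"
  unfolding nonneg_preserving_def
proof (intro allI impI)
  fix x :: "real^'n" assume x: "nonneg_vec x"
  define y where "y = resolvent P t *v x"
  have "t *\<^sub>R y - P *v y = x" using resolvent_iff[OF inv_t] y_def by blast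
  hence "u *\<^sub>R y - P *v y = x + (u - t) *\<^sub>R y" by (simp add: algebra_simps)
  hence "y = resolvent P u *v (x + (u - t) *\<^sub>R y)" using resolvent_iff[OF inv_u] by blast
  hence y_eq: "y = resolvent P u *v x + (u - t) *\<^sub>R (resolvent P u *v y)"
    by (simp add: matrix_vector_right_distrib matrix_vector_mult_scaleR)
  have "nonneg_vec (resolvent P u *v x)" using R x unfolding nonneg_preserving_def by blast
  hence "nonneg_vec y" using fixpoint_nonneg[OF R _ y_eq] le small by simp
  thus "nonneg_vec (resolvent P t *v x)" unfolding y_def .
qed

text \<open>Just above a point t where tI - P is invertible, (u - t) |R(u) 1|_inf stays below 1
  (a uniform local bound on the resolvent, from the operator bound of R(t)).\<close>

lemma resolvent_bound_near:
  fixes P :: "real^'n^'n"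
  assumes inv_t: "invertible (t *\<^sub>R mat 1 - P)"
  obtains \<delta> where "\<delta> > 0"
    and "\<And>u. t < u \<Longrightarrow> u \<le> t + \<delta> \<Longrightarrow> invertible (u *\<^sub>R mat 1 - P) \<Longrightarrow>
           (u - t) * infnorm (resolvent P u *v 1) < 1"
proof -
  obtain C where C0: "C \<ge> 0" and C: "\<And>v. infnorm (resolvent P t *v v) \<le> C * infnorm v"
    using matrix_infnorm_bound by blast
  define \<delta> where "\<delta> = 1 / (4 * C + 4)"
  have "(u - t) * infnorm (resolvent P u *v 1) < 1"
    if u: "t < u" "u \<le> t + \<delta>" and inv_u: "invertible (u *\<^sub>R mat 1 - P)" for u
  proof -
    define d where "d = u - t"
    define w where "w = resolvent P u *v 1"
    have d0: "d > 0" and dC: "d * C \<le> 1/4"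
      using u C0 unfolding d_def \<delta>_def by (auto simp: field_simps)
    have "u *\<^sub>R w - P *v w = 1" using resolvent_iff[OF inv_u] w_def by blast
    hence "t *\<^sub>R w - P *v w = 1 - d *\<^sub>R w" unfolding d_def by (simp add: algebra_simps)
    hence "w = resolvent P t *v (1 - d *\<^sub>R w)" using resolvent_iff[OF inv_t] by blast
    hence "infnorm w \<le> C * infnorm (1 - d *\<^sub>R w)" using C by metis
    also have "\<dots> \<le> C * (1 + d * infnorm w)"
    proof (intro mult_left_mono C0)
      have "infnorm (1::real^'n) \<le> 1" by (rule infnorm_le_cart) simp
      thus "infnorm (1 - d *\<^sub>R w) \<le> 1 + d * infnorm w"
        using infnorm_triangle[of 1 "- (d *\<^sub>R w)"] d0 by (simp add: infnorm_neg infnorm_mul)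
    qed
    finally have "d * infnorm w \<le> d * (C * (1 + d * infnorm w))"
      using d0 by (simp add: mult_left_mono)
    also have "\<dots> = d * C + (d * C) * (d * infnorm w)" by (simp add: algebra_simps)
    also have "\<dots> \<le> 1/4 + 1/4 * (d * infnorm w)"
      using dC d0 infnorm_pos_le[of w] by (intro add_mono mult_right_mono) auto
    finally show ?thesis unfolding d_def w_def by linarith
  qed
  moreover have "\<delta> > 0" unfolding \<delta>_def using C0 by simp
  ultimately show ?thesis using that by blast
qed

lemma resolvent_preserving_from_above:
  fixes P :: "real^'n^'n"
  assumes inv: "\<And>u. u \<ge> t \<Longrightarrow> invertible (u *\<^sub>R mat 1 - P)"
    and above: "\<And>u. u > t \<Longrightarrow> nonneg_preserving (resolvent P u)"
  shows "nonneg_preserving (resolvent P t)"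
proof -
  obtain \<delta> where \<delta>: "\<delta> > 0" "\<And>u. t < u \<Longrightarrow> u \<le> t + \<delta> \<Longrightarrow> invertible (u *\<^sub>R mat 1 - P) \<Longrightarrow>
      (u - t) * infnorm (resolvent P u *v 1) < 1"
    using resolvent_bound_near[OF inv] by blast
  have "(t + \<delta> - t) * infnorm (resolvent P (t + \<delta>) *v 1) < 1"
    using \<delta> by (intro \<delta>(2) inv) auto
  thus ?thesis using \<delta>(1) by (intro resolvent_preserving_shift[of t P "t + \<delta>"] inv above) auto
qed

lemma resolvent_preserving_below:
  fixes P :: "real^'n^'n"
  assumes inv_t: "invertible (t *\<^sub>R mat 1 - P)" and R: "nonneg_preserving (resolvent P t)"
  obtains d where "d > 0"
    and "\<And>u. t - d \<le> u \<Longrightarrow> u \<le> t \<Longrightarrow> invertible (u *\<^sub>R mat 1 - P) \<Longrightarrow>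
           nonneg_preserving (resolvent P u)"
proof -
  define K where "K = infnorm (resolvent P t *v 1)"
  define d where "d = 1 / (2 * (K + 1))"
  have K0: "K \<ge> 0" unfolding K_def by (rule infnorm_pos_le)
  have "d * K < 1" using K0 unfolding d_def by (simp add: field_simps)
  hence "nonneg_preserving (resolvent P u)"
    if "t - d \<le> u" "u \<le> t" "invertible (u *\<^sub>R mat 1 - P)" for u
  proof -
    have "(t - u) * K \<le> d * K" using that K0 by (intro mult_right_mono) auto
    thus ?thesis using resolvent_preserving_shift[OF that(3) inv_t that(2) R] \<open>d * K < 1\<close>
      unfolding K_def by linarith
  qed
  moreover have "d > 0" using K0 unfolding d_def by simp
  ultimately show ?thesis using that by blast
qed

text \<open>Continuation argument: if P >= 0 and tI - P is invertible for all t >= s, then R(s) >= 0.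
  The set of t >= s from which on all resolvents are nonnegative contains large t; its
  infimum belongs to it by closedness, and equals s by openness.\<close>

lemma resolvent_nonneg_by_continuation:
  fixes P :: "real^'n^'n"
  assumes P: "nonneg_mat P" and inv: "\<And>t. t \<ge> s \<Longrightarrow> invertible (t *\<^sub>R mat 1 - P)"
  shows "nonneg_preserving (resolvent P s)"
proof -
  define T where "T = {t. s \<le> t \<and> (\<forall>u\<ge>t. nonneg_preserving (resolvent P u))}"
  define t0 where "t0 = Inf T"
  define L where "L = \<bar>s\<bar> + infnorm (P *v 1) + 1"
  have "L \<in> T" unfolding T_def
  proof (intro CollectI conjI allI impI)
    show "s \<le> L" unfolding L_def using infnorm_pos_le[of "P *v 1"] by linarith
    fix u assume "L \<le> u"
    hence "u > infnorm (P *v 1)" "s \<le> u"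
      unfolding L_def using infnorm_pos_le[of "P *v 1"] by linarith+
    thus "nonneg_preserving (resolvent P u)"
      using resolvent_preserving_large[OF nonneg_mat_preserving[OF P]] inv by blast
  qed
  hence T_ne: "T \<noteq> {}" by blast
  have T_bdd: "bdd_below T" unfolding T_def by (rule bdd_belowI[of _ s]) simp
  have t0_s: "s \<le> t0" unfolding t0_def using T_ne by (intro cInf_greatest) (auto simp: T_def)
  have above: "nonneg_preserving (resolvent P u)" if "u > t0" for u
  proof -
    obtain t where "t \<in> T" "t < u" using \<open>u > t0\<close> cInf_less_iff[OF T_ne T_bdd] unfolding t0_def by auto
    thus ?thesis unfolding T_def by auto
  qed
  have at: "nonneg_preserving (resolvent P t0)"
  proof (rule resolvent_preserving_from_above)
    show "invertible (u *\<^sub>R mat 1 - P)" if "u \<ge> t0" for u using inv t0_s that by simp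
  qed (rule above)
  obtain d where d: "d > 0" "\<And>u. t0 - d \<le> u \<Longrightarrow> u \<le> t0 \<Longrightarrow> invertible (u *\<^sub>R mat 1 - P) \<Longrightarrow>
      nonneg_preserving (resolvent P u)"
    using resolvent_preserving_below[OF inv[OF t0_s] at] by blast
  have "t0 = s"
  proof (rule ccontr)
    assume "t0 \<noteq> s"
    define t1 where "t1 = max s (t0 - d)"
    have "nonneg_preserving (resolvent P u)" if "t1 \<le> u" for u
      using that d(2)[of u] above[of u] inv[of u] unfolding t1_def by (cases "u > t0") auto
    hence "t1 \<in> T" unfolding T_def t1_def by auto
    hence "t0 \<le> t1" unfolding t0_def using T_bdd by (rule cInf_lower)
    thus False using \<open>t0 \<noteq> s\<close> t0_s d(1) unfolding t1_def by linarith
  qed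
  thus ?thesis using at by simp
qed

theorem nonsingular_M_matrix_inverse_nonneg:
  fixes M :: "real^'n^'n"
  assumes "nonsingular_M_matrix M"
  shows "nonneg_preserving (matrix_inv M)"
proof -
  obtain s P where P: "nonneg_mat P" and M: "M = s *\<^sub>R mat 1 - P" and s: "s \<ge> spectral_radius P"
    using assms unfolding nonsingular_M_matrix_def M_matrix_def by blast
  have "invertible (t *\<^sub>R mat 1 - P)" if "t \<ge> s" for t
  proof (cases "t = s")
    case True
    thus ?thesis using assms M unfolding nonsingular_M_matrix_def by simp
  next
    case False
    thus ?thesis using that s by (intro invertible_above_spectral_radius) simp
  qed
  thus ?thesis using resolvent_nonneg_by_continuation[OF P] M unfolding resolvent_def by simp
qed

lemma MB_tensor_nonneg:
  assumes inv: "nonneg_preserving (matrix_inv M)"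
    and b: "\<And>x y. nonneg_vec x \<Longrightarrow> nonneg_vec y \<Longrightarrow> nonneg_vec (b x y)"
  shows "MB_tensor M b r s x \<ge> 0"
proof -
  have "nonneg_vec (axis j (1::real))" for j :: "'n::finite" unfolding nonneg_vec_def axis_def by simp
  thus ?thesis using inv b unfolding nonneg_preserving_def MB_tensor_def nonneg_vec_def by blast
qed

definition new_indices ::
  "real^'n^'n \<Rightarrow> (real^'n \<Rightarrow> real^'n \<Rightarrow> real^'n) \<Rightarrow> 'n set \<Rightarrow> 'n \<Rightarrow> 'n set" where
  "new_indices M b S t = {i. i \<notin> S \<and>
     (matrix_inv M *v (b (ind_vec S) (axis t 1) + b (axis t 1) (ind_vec S)))$i > 0}"

lemma pos_step_iff:
  "pos_step M b (S, T) st' \<longleftrightarrow> T \<noteq> {} \<and> S \<noteq> UNIV \<and>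
     (\<exists>t\<in>T. st' = (S \<union> new_indices M b S t, (T - {t}) \<union> new_indices M b S t))"
  by (simp add: pos_step_def new_indices_def Let_def)

lemma new_indices_iff:
  assumes "bilinear b"
  shows "i \<in> new_indices M b S t \<longleftrightarrow>
           i \<notin> S \<and> (\<Sum>s\<in>S. MB_tensor M b s t i + MB_tensor M b t s i) > 0"
proof -
  have ind: "ind_vec S = (\<Sum>s\<in>S. axis s (1::real))" by (simp add: vec_eq_iff ind_vec_def axis_def)
  have lin: "linear (\<lambda>x. b x y)" "linear (\<lambda>x. b y x)" for y
    using assms unfolding bilinear_def by auto
  have "matrix_inv M *v (b (ind_vec S) (axis t 1) + b (axis t 1) (ind_vec S))
      = (\<Sum>s\<in>S. matrix_inv M *v b (axis s 1) (axis t 1) + matrix_inv M *v b (axis t 1) (axis s 1))"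
    unfolding ind real_vector.linear_sum[OF lin(1)] real_vector.linear_sum[OF lin(2)]
    by (simp add: real_vector.linear_sum[OF matrix_vector_mul_linear] matrix_vector_right_distrib
        sum.distrib)
  thus ?thesis unfolding new_indices_def MB_tensor_def
    by (simp add: sum_component)
qed

definition run_measure :: "'n::finite set \<times> 'n set \<Rightarrow> nat" where
  "run_measure st = card (- fst st) * (CARD('n) + 1) + card (snd st)"

text \<open>Every iteration either enlarges S or removes t from T without enlarging S.\<close>

lemma pos_step_decreases:
  fixes st :: "'n::finite set \<times> 'n set"
  assumes "pos_step M b st st'"
  shows "run_measure st' < run_measure st"
proof -
  obtain S T where st: "st = (S, T)" by (cases st)
  obtain t where t: "t \<in> T"
    and st': "st' = (S \<union> new_indices M b S t, (T - {t}) \<union> new_indices M b S t)"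
    using assms unfolding st pos_step_iff by blast
  define N where "N = new_indices M b S t"
  have NS: "N \<inter> S = {}" unfolding N_def new_indices_def by auto
  show ?thesis
  proof (cases "N = {}")
    case True
    have "card (T - {t}) < card T" by (rule card_Diff1_less[OF finite t])
    thus ?thesis using True unfolding run_measure_def st st' N_def[symmetric] by simp
  next
    case False
    hence "- (S \<union> N) \<subset> - S" using NS by blast
    hence less: "card (- (S \<union> N)) < card (- S)" by (rule psubset_card_mono[rotated]) simp
    have "card (T - {t} \<union> N) \<le> CARD('n)"
      by (rule card_mono[OF finite subset_UNIV])
    hence "card (- (S \<union> N)) * (CARD('n) + 1) + card (T - {t} \<union> N)
        < (card (- (S \<union> N)) + 1) * (CARD('n) + 1)" by simp
    also have "\<dots> \<le> card (- S) * (CARD('n) + 1)" using less by (intro mult_right_mono) auto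
    finally show ?thesis unfolding run_measure_def st st' N_def[symmetric] by simp
  qed
qed

lemma no_infinite_run: "\<not> (\<exists>f. f 0 = st \<and> (\<forall>k. pos_step M b (f k) (f (Suc k))))"
proof -
  have "wf (Wellfounded.measure run_measure)" by simp
  hence "\<nexists>f. \<forall>k. (f (Suc k), f k) \<in> Wellfounded.measure run_measure"
    by (simp only: wf_iff_no_infinite_down_chain)
  thus ?thesis using pos_step_decreases by (metis in_measure)
qed

definition pos_chain ::
  "real^'n^'n \<Rightarrow> real^'n \<Rightarrow> (real^'n \<Rightarrow> real^'n \<Rightarrow> real^'n) \<Rightarrow> 'n set list \<Rightarrow> bool" where
  "pos_chain M a b Ss \<longleftrightarrow> Ss \<noteq> [] \<and> Ss ! 0 = init_set M a \<and>
     (\<forall>h. Suc h < length Ss \<longrightarrow> Ss ! h \<subseteq> Ss ! Suc h) \<and>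
     (\<forall>h. Suc h < length Ss \<longrightarrow>
        (\<forall>t \<in> Ss ! Suc h - Ss ! h. \<exists>r \<in> Ss ! h. \<exists>s \<in> Ss ! h. MB_tensor M b r s t > 0))"

lemma positivity_showing_iff:
  "positivity_showing M a b i Ss \<longleftrightarrow> pos_chain M a b Ss \<and> i \<in> last Ss"
  unfolding positivity_showing_def pos_chain_def by blast

lemma pos_chain_snoc:
  assumes chain: "pos_chain M a b Ss" and sub: "last Ss \<subseteq> S'"
    and wit: "\<forall>t\<in>S' - last Ss. \<exists>r\<in>last Ss. \<exists>s\<in>last Ss. MB_tensor M b r s t > 0"
  shows "pos_chain M a b (Ss @ [S'])"
proof -
  have ne: "Ss \<noteq> []" using chain unfolding pos_chain_def by blast
  have step: "(Ss @ [S']) ! h = last Ss \<and> (Ss @ [S']) ! Suc h = S'"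
    if "Suc h < length (Ss @ [S'])" "\<not> Suc h < length Ss" for h
  proof -
    have "h = length Ss - 1" using that by simp
    thus ?thesis using ne by (simp add: nth_append last_conv_nth)
  qed
  show ?thesis unfolding pos_chain_def
  proof (intro conjI allI impI)
    show "Ss @ [S'] \<noteq> []" by simp
    show "(Ss @ [S']) ! 0 = init_set M a" using chain ne unfolding pos_chain_def by (simp add: nth_append)
  next
    fix h assume h: "Suc h < length (Ss @ [S'])"
    show "(Ss @ [S']) ! h \<subseteq> (Ss @ [S']) ! Suc h"
    proof (cases "Suc h < length Ss")
      case True thus ?thesis using chain unfolding pos_chain_def by (simp add: nth_append)
    qed (use step[OF h] sub in simp)
  next
    fix h assume h: "Suc h < length (Ss @ [S'])"
    show "\<forall>t\<in>(Ss @ [S']) ! Suc h - (Ss @ [S']) ! h.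
            \<exists>r\<in>(Ss @ [S']) ! h. \<exists>s\<in>(Ss @ [S']) ! h. MB_tensor M b r s t > 0"
    proof (cases "Suc h < length Ss")
      case True thus ?thesis using chain unfolding pos_chain_def by (simp add: nth_append)
    qed (use step[OF h] wit in simp)
  qed
qed

lemma pos_chain_within_closed:
  assumes chain: "pos_chain M a b Ss" and init: "init_set M a \<subseteq> S"
    and closed: "\<And>r s x. r \<in> S \<Longrightarrow> s \<in> S \<Longrightarrow> MB_tensor M b r s x > 0 \<Longrightarrow> x \<in> S"
  shows "last Ss \<subseteq> S"
proof -
  have "Ss ! h \<subseteq> S" if "h < length Ss" for h
    using that
  proof (induction h)
    case 0
    thus ?case using chain init unfolding pos_chain_def by simp
  next
    case (Suc h)
    have prev: "Ss ! h \<subseteq> S" using Suc by simp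
    have "\<forall>x \<in> Ss ! Suc h - Ss ! h. \<exists>r \<in> Ss ! h. \<exists>s \<in> Ss ! h. MB_tensor M b r s x > 0"
      using chain Suc.prems unfolding pos_chain_def by blast
    thus ?case using prev closed by blast
  qed
  moreover have "Ss \<noteq> []" using chain unfolding pos_chain_def by blast
  ultimately show ?thesis by (simp add: last_conv_nth)
qed

text \<open>Loop invariant: T is a subset of S, S contains S_1, S is closed under pairs of processed
  indices (those in S - T), and S is the last set of a chain.\<close>

definition alg_invariant ::
  "real^'n^'n \<Rightarrow> real^'n \<Rightarrow> (real^'n \<Rightarrow> real^'n \<Rightarrow> real^'n) \<Rightarrow> 'n set \<Rightarrow> 'n set \<Rightarrow> bool" where
  "alg_invariant M a b S T \<longleftrightarrow> T \<subseteq> S \<and> init_set M a \<subseteq> S \<and>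
     (\<forall>r\<in>S - T. \<forall>s\<in>S - T. \<forall>x. MB_tensor M b r s x > 0 \<longrightarrow> x \<in> S) \<and>
     (\<exists>Ss. pos_chain M a b Ss \<and> last Ss = S)"

lemma alg_invariant_init: "alg_invariant M a b (init_set M a) (init_set M a)"
  unfolding alg_invariant_def by (auto intro!: exI[of _ "[init_set M a]"] simp: pos_chain_def)

lemma new_index_witness:
  assumes "bilinear b" and "t \<in> S" and "x \<in> new_indices M b S t"
  shows "\<exists>r\<in>S. \<exists>s\<in>S. MB_tensor M b r s x > 0"
proof (rule ccontr)
  assume "\<not> ?thesis"
  hence "MB_tensor M b r s x \<le> 0" if "r \<in> S" "s \<in> S" for r s using that by (meson not_less)
  hence "(\<Sum>s\<in>S. MB_tensor M b s t x + MB_tensor M b t s x) \<le> 0"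
    using \<open>t \<in> S\<close> by (intro sum_nonpos) (simp add: add_nonpos_nonpos)
  thus False using assms(3) new_indices_iff[OF assms(1)] by (simp add: not_less)
qed

lemma new_indices_catch:
  assumes "bilinear b" and nonneg: "\<And>r s x. MB_tensor M b r s x \<ge> 0"
    and "r \<in> S" and pos: "MB_tensor M b r t x > 0 \<or> MB_tensor M b t r x > 0"
  shows "x \<in> S \<union> new_indices M b S t"
proof -
  have "MB_tensor M b r t x + MB_tensor M b t r x \<le> (\<Sum>s\<in>S. MB_tensor M b s t x + MB_tensor M b t s x)"
    using \<open>r \<in> S\<close> nonneg by (intro member_le_sum add_nonneg_nonneg) auto
  moreover have "MB_tensor M b r t x + MB_tensor M b t r x > 0"
    using pos nonneg[of r t x] nonneg[of t r x] by linarith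
  ultimately show ?thesis using new_indices_iff[OF assms(1)] by auto
qed

lemma alg_invariant_step:
  assumes bl: "bilinear b" and nonneg: "\<And>r s x. MB_tensor M b r s x \<ge> 0"
    and inv: "alg_invariant M a b S T" and step: "pos_step M b (S, T) (S', T')"
  shows "alg_invariant M a b S' T'"
proof -
  obtain t where t: "t \<in> T" and S': "S' = S \<union> new_indices M b S t"
    and T': "T' = (T - {t}) \<union> new_indices M b S t"
    using step unfolding pos_step_iff by auto
  have TS: "T \<subseteq> S" and init: "init_set M a \<subseteq> S"
    and closed: "\<And>r s x. r \<in> S - T \<Longrightarrow> s \<in> S - T \<Longrightarrow> MB_tensor M b r s x > 0 \<Longrightarrow> x \<in> S"
    using inv unfolding alg_invariant_def by blast+
  obtain Ss where Ss: "pos_chain M a b Ss" "last Ss = S" using inv unfolding alg_invariant_def by blast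
  have tS: "t \<in> S" using t TS by blast
  have "T' \<subseteq> S'" "init_set M a \<subseteq> S'" using TS init unfolding S' T' by auto
  moreover have "pos_chain M a b (Ss @ [S'])"
    using Ss new_index_witness[OF bl tS] unfolding S' by (intro pos_chain_snoc) auto
  moreover have "x \<in> S'"
    if "r \<in> S' - T'" "s \<in> S' - T'" "MB_tensor M b r s x > 0" for r s x
  proof -
    have rs: "r \<in> S - T \<union> {t}" "s \<in> S - T \<union> {t}" using that(1,2) unfolding S' T' by auto
    hence "r \<in> S" "s \<in> S" using tS by auto
    consider "r = t" | "s = t" | "r \<in> S - T" "s \<in> S - T" using rs by blast
    thus ?thesis
    proof cases
      case 1
      thus ?thesis using new_indices_catch[OF bl nonneg \<open>s \<in> S\<close>, of t x] that(3) unfolding S' by simp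
    next
      case 2
      thus ?thesis using new_indices_catch[OF bl nonneg \<open>r \<in> S\<close>, of t x] that(3) unfolding S' by simp
    next
      case 3
      thus ?thesis using closed that(3) unfolding S' by blast
    qed
  qed
  ultimately show ?thesis unfolding alg_invariant_def by (metis last_snoc)
qed

lemma alg_invariant_reachable:
  assumes bl: "bilinear b" and nonneg: "\<And>r s x. MB_tensor M b r s x \<ge> 0"
    and reach: "(pos_step M b)\<^sup>*\<^sup>* (init_set M a, init_set M a) (S, T)"
  shows "alg_invariant M a b S T"
  using reach
proof (induction "(S, T)" arbitrary: S T rule: rtranclp_induct)
  case base thus ?case by (simp add: alg_invariant_init)
next
  case (step st)
  obtain S0 T0 where "st = (S0, T0)" by (cases st)
  thus ?case using step alg_invariant_step[OF bl nonneg] by blast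
qed

text \<open>Soundness is the chain part of the
  invariant; completeness holds since a halted state has S = UNIV or T empty, and in the
  latter case S is closed under the tensor.\<close>

theorem mainTheorem15:
  fixes M :: "real^'n^'n" and a :: "real^'n" and b :: "real^'n \<Rightarrow> real^'n \<Rightarrow> real^'n"
  assumes "nonsingular_M_matrix M"
    and "nonneg_vec a"
    and "bilinear b"
    and "\<And>x y. nonneg_vec x \<Longrightarrow> nonneg_vec y \<Longrightarrow> nonneg_vec (b x y)"
  shows "\<not> (\<exists>f. f 0 = (init_set M a, init_set M a) \<and> (\<forall>k. pos_step M b (f k) (f (Suc k))))
    \<and> (\<forall>st. (pos_step M b)\<^sup>*\<^sup>* (init_set M a, init_set M a) st \<and> pos_halted st \<longrightarrow>
          (\<forall>i. i \<in> fst st \<longleftrightarrow> (\<exists>Ss. positivity_showing M a b i Ss)))"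
proof (intro conjI allI impI)
  show "\<not> (\<exists>f. f 0 = (init_set M a, init_set M a) \<and> (\<forall>k. pos_step M b (f k) (f (Suc k))))"
    by (rule no_infinite_run)
  have nonneg: "MB_tensor M b r s x \<ge> 0" for r s x
    using MB_tensor_nonneg[OF nonsingular_M_matrix_inverse_nonneg[OF assms(1)] assms(4)] .
  fix st i
  assume run: "(pos_step M b)\<^sup>*\<^sup>* (init_set M a, init_set M a) st \<and> pos_halted st"
  obtain S T where st: "st = (S, T)" by (cases st)
  have inv: "alg_invariant M a b S T"
    using alg_invariant_reachable[OF assms(3) nonneg] run unfolding st by blast
  show "i \<in> fst st \<longleftrightarrow> (\<exists>Ss. positivity_showing M a b i Ss)"
  proof
    assume "i \<in> fst st"
    thus "\<exists>Ss. positivity_showing M a b i Ss"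
      using inv unfolding st alg_invariant_def positivity_showing_iff by auto
  next
    assume "\<exists>Ss. positivity_showing M a b i Ss"
    then obtain Ss where chain: "pos_chain M a b Ss" and i: "i \<in> last Ss"
      unfolding positivity_showing_iff by blast
    have "T = {} \<or> S = UNIV" using run unfolding st pos_halted_def by simp
    hence "last Ss \<subseteq> S"
      using pos_chain_within_closed[OF chain] inv unfolding alg_invariant_def by blast
    thus "i \<in> fst st" using i unfolding st by auto
  qed
qed

end
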